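(* Let $R$ be a $*$-ring, let $a\in R$, and let $n\geq 3$ be an integer. Then $a$ is core invertible if and only if there exists $b\in R$ such that ${}^{\circ}a=Rb$ and $u=a^{*}a^{n}+b^{*}b$ is invertible. In this case $$a^{\mathrm{core}}=a^{n-1}u^{-1}a^{*}.$$
   Context: A $*$-ring is an associative ring with identity $1$ and an involution $*$, i.e. $(a^* )^*=a$, $(ab)^*=b^*a^*$ and $(a+b)^*=a^*+b^*$. For $a\in R$: ${}^{\circ}a=\{x\in R : xa=0\}$ and $Rb=\{xb : x\in R\}$. An element $a$ is core invertible if there is $x\in R$ with $(ax)^*=ax$, $ax^2=x$ and $xa^2=a$. Such an $x$ is unique and denoted $a^{\mathrm{core}}$. "Invertible" means having a two-sided inverse in $R$. *)

theory Defs
  imports Main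
begin

class star_ring = ring_1 +
  fixes star :: "'a \<Rightarrow> 'a"
  assumes star_star: "star (star a) = a"
    and star_mult: "star (a * b) = star b * star a"
    and star_add: "star (a + b) = star a + star b"

definition invertible_el :: "'a::ring_1 \<Rightarrow> bool" where
  "invertible_el u \<longleftrightarrow> (\<exists>v. u * v = 1 \<and> v * u = 1)"

definition ring_inv :: "'a::ring_1 \<Rightarrow> 'a" where
  "ring_inv u = (THE v. u * v = 1 \<and> v * u = 1)"

definition left_ann :: "'a::ring_1 \<Rightarrow> 'a set" where
  "left_ann a = {x. x * a = 0}"

definition left_ideal_gen :: "'a::ring_1 \<Rightarrow> 'a set" where
  "left_ideal_gen b = {x * b | x. True}"

definition is_core_inverse :: "'a::star_ring \<Rightarrow> 'a \<Rightarrow> bool" where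
  "is_core_inverse a x \<longleftrightarrow> star (a * x) = a * x \<and> a * x^2 = x \<and> x * a^2 = a"

definition core_invertible :: "'a::star_ring \<Rightarrow> bool" where
  "core_invertible a \<longleftrightarrow> (\<exists>x. is_core_inverse a x)"

definition core_inverse :: "'a::star_ring \<Rightarrow> 'a" where
  "core_inverse a = (THE x. is_core_inverse a x)"

end

theory Submission
  imports Defs
begin

text \<open>
  If c is the core inverse of a, then b = 1 - a c is a hermitian idempotent generating the left
  annihilator of a, and u = a^* a^n + b^* b has the explicit two-sided inverse
  c^n c^* + (1 - c a) (1 - c a)^*.

  Conversely, b a = 0 gives a^* b^* = 0, so u v = 1 yields a^* = a^* a^* a^n v, i.e. a = s a a
  with s = (a^n v)^*. Then p = a^n v a^* is hermitian with p a a = a a; as n \<ge> 3, p = a a a r,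
  and a = s a a upgrades this to p a = a. Hence x = a^(n-1) v a^*, for which a x = p, is the
  core inverse.
\<close>

lemma star_one [simp]: "star (1::'a::star_ring) = 1"
  by (metis mult_1_left star_mult star_star)

lemma star_zero [simp]: "star (0::'a::star_ring) = 0"
  by (metis add_cancel_right_right star_add)

lemma star_diff: "star ((x::'a::star_ring) - y) = star x - star y"
  by (metis eq_diff_eq star_add)

lemma ring_inv_right_inverse:
  assumes "invertible_el (u::'a::ring_1)"
  shows "u * ring_inv u = 1"
proof -
  from assms obtain v where v: "u * v = 1" "v * u = 1"
    unfolding invertible_el_def by blast
  have "w = v" if "u * w = 1 \<and> w * u = 1" for w
  proof -
    have "w = w * (u * v)"
      using v by simp
    also have "\<dots> = v"
      using that by (simp add: mult.assoc[symmetric])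
    finally show ?thesis .
  qed
  then have "ring_inv u = v"
    unfolding ring_inv_def using v by (intro the_equality) blast+
  with v show ?thesis by simp
qed

lemma is_core_inverseD:
  fixes a c :: "'a::star_ring"
  assumes "is_core_inverse a c"
  shows "star (a * c) = a * c" and "a * c * c = c" and "c * a * a = a"
    and "a * c * a = a" and "c * a * c = c"
proof -
  show herm: "star (a * c) = a * c" and acc: "a * c * c = c" and caa: "c * a * a = a"
    using assms unfolding is_core_inverse_def by (simp_all add: power2_eq_square mult.assoc)
  show "a * c * a = a"
    by (metis acc caa mult.assoc)
  show "c * a * c = c"
    by (metis acc caa mult.assoc)
qed

lemma is_core_inverse_unique:
  fixes a x y :: "'a::star_ring"
  assumes x: "is_core_inverse a x" and y: "is_core_inverse a y"
  shows "x = y"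
proof -
  note X = is_core_inverseD[OF x] and Y = is_core_inverseD[OF y]
  have "a * x = star (a * x) * star (a * y)"
    using X(1) Y(4) by (metis mult.assoc star_mult)
  also have "\<dots> = a * y"
    using X(1,4) Y(1) by (metis mult.assoc)
  finally have ax_ay: "a * x = a * y" .
  have "x = y * a * a * x * x"
    using X(2) Y(3) by (simp add: mult.assoc)
  also have "\<dots> = y"
    using X(2) Y(5) ax_ay by (metis mult.assoc)
  finally show ?thesis .
qed

lemma core_inverse_eqI:
  assumes "is_core_inverse a x"
  shows "core_inverse a = x"
  unfolding core_inverse_def using assms is_core_inverse_unique by blast

lemma core_complement_props:
  fixes a c :: "'a::star_ring"
  assumes "is_core_inverse a c"
  shows "star (1 - a * c) = 1 - a * c" and "(1 - a * c) * (1 - a * c) = 1 - a * c"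
    and "(1 - a * c) * a = 0" and "(1 - a * c) * c = 0"
  using is_core_inverseD[OF assms]
  by (simp_all add: star_diff algebra_simps)

lemma left_ann_core_inverse:
  fixes a c :: "'a::star_ring"
  assumes "is_core_inverse a c"
  shows "left_ann a = left_ideal_gen (1 - a * c)"
proof (intro set_eqI iffI)
  fix y assume "y \<in> left_ann a"
  then have "y = y * (1 - a * c)"
    unfolding left_ann_def by (simp add: algebra_simps mult.assoc[symmetric])
  then show "y \<in> left_ideal_gen (1 - a * c)"
    unfolding left_ideal_gen_def by blast
next
  fix y assume "y \<in> left_ideal_gen (1 - a * c)"
  then show "y \<in> left_ann a"
    using core_complement_props(3)[OF assms]
    unfolding left_ideal_gen_def left_ann_def by (auto simp: mult.assoc)
qed

lemma power_mult_power_eq: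
  fixes x y :: "'a::monoid_mult"
  assumes "x * y * y = y"
  shows "x ^ Suc k * y ^ Suc k = x * y"
proof (induction k)
  case (Suc k)
  have "x ^ Suc (Suc k) * y ^ Suc (Suc k) = x ^ Suc k * (x * y * y) * y ^ k"
    by (simp only: power_Suc2[of x "Suc k"] power_Suc[of y "Suc k"] power_Suc[of y k] mult.assoc)
  with Suc assms show ?case
    by (simp add: mult.assoc power_commutes)
qed simp

lemma core_inverse_right_inverse:
  fixes a c :: "'a::star_ring"
  assumes c: "is_core_inverse a c"
  shows "(star a * a ^ Suc m + star (1 - a * c) * (1 - a * c))
           * (c ^ Suc m * star c + (1 - c * a) * star (1 - c * a)) = 1"
proof -
  note C = is_core_inverseD[OF c]
  define q where "q = 1 - a * c"
  have q: "star q = q" "q * q = q" "q * a = 0" "q * c = 0"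
    using core_complement_props[OF c] by (simp_all add: q_def)
  define u where "u = star a * a ^ Suc m + q"
  have "u * c ^ Suc m = star a * (a ^ Suc m * c ^ Suc m) + q * c * c ^ m"
    by (simp only: u_def distrib_right power_Suc mult.assoc)
  also have "\<dots> = star a * (a * c)"
    using power_mult_power_eq[OF C(2), of m] q(4) by simp
  also have "\<dots> = star a"
    using C(1,4) by (metis star_mult)
  finally have u_cn: "u * c ^ Suc m = star a" .
  have "u * (c * a) = star a * (a ^ m * (a * c * a)) + q * c * a"
    by (simp only: u_def distrib_right power_Suc2 mult.assoc)
  then have "u * (c * a) = star a * a ^ Suc m"
    using C(4) q(4) by (simp add: power_commutes)
  then have u_ca: "u * (1 - c * a) = q"
    by (simp add: u_def right_diff_distrib)
  have "c * a * q = c * a - a * c"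
    using C(3) by (simp add: q_def right_diff_distrib mult.assoc[symmetric])
  then have q_ca: "q * star (c * a) = star (c * a) - a * c"
    using C(1) q(1) by (metis star_diff star_mult)
  have "u * (c ^ Suc m * star c + (1 - c * a) * star (1 - c * a))
      = star (c * a) + q * (1 - star (c * a))"
    using u_cn u_ca by (simp add: distrib_left mult.assoc[symmetric] star_diff star_mult)
  also have "\<dots> = 1"
    using q_ca by (simp add: right_diff_distrib q_def)
  finally show ?thesis
    using q by (simp add: u_def q_def)
qed

lemma core_inverse_left_inverse:
  fixes a c :: "'a::star_ring"
  assumes c: "is_core_inverse a c"
  shows "(c ^ Suc m * star c + (1 - c * a) * star (1 - c * a))
           * (star a * a ^ Suc m + star (1 - a * c) * (1 - a * c)) = 1"
proof -
  note C = is_core_inverseD[OF c]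
  define q where "q = 1 - a * c"
  have q: "star q = q" "q * q = q" "q * a = 0" "q * c = 0"
    using core_complement_props[OF c] by (simp_all add: q_def)
  define u where "u = star a * a ^ Suc m + q"
  have "star c * q = star (q * c)"
    using q(1) by (simp add: star_mult)
  then have "star c * u = star (a * c) * a ^ Suc m"
    using q(4) by (simp add: u_def distrib_left star_mult mult.assoc)
  also have "\<dots> = a ^ Suc m"
    using C(1,4) by (simp add: mult.assoc[symmetric])
  finally have c_u: "star c * u = a ^ Suc m" .
  have ca_u: "star (1 - c * a) * u = q"
    using c_u by (simp add: star_diff star_mult left_diff_distrib mult.assoc u_def)
  have "c * a * q = c * a - a * c"
    using C(3) by (simp add: q_def right_diff_distrib mult.assoc[symmetric])
  then have "(c ^ Suc m * star c + (1 - c * a) * star (1 - c * a)) * u = c * a + q - (c * a - a * c)"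
    using c_u ca_u power_mult_power_eq[OF C(3), of m]
    by (simp add: distrib_right left_diff_distrib mult.assoc)
  also have "\<dots> = 1"
    by (simp add: q_def)
  finally show ?thesis
    using q by (simp add: u_def q_def)
qed

lemma invertible_el_of_core_inverse:
  fixes a c :: "'a::star_ring"
  assumes "is_core_inverse a c" and "n \<ge> 1"
  shows "invertible_el (star a * a ^ n + star (1 - a * c) * (1 - a * c))"
proof -
  obtain m where "n = Suc m"
    using assms(2) by (cases n) auto
  then show ?thesis
    unfolding invertible_el_def
    using core_inverse_right_inverse[OF assms(1)] core_inverse_left_inverse[OF assms(1)] by blast
qed

lemma mult_eq_0_of_left_ann_eq:
  assumes "left_ann a = left_ideal_gen b"
  shows "b * a = 0"
proof -
  have "b \<in> left_ideal_gen b"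
    unfolding left_ideal_gen_def by (metis (mono_tags) mem_Collect_eq mult_1_left)
  with assms show ?thesis
    unfolding left_ann_def by blast
qed

lemma star_eq_of_right_inverse:
  fixes a b v :: "'a::star_ring"
  assumes "b * a = 0" and "(star a * a ^ n + star b * b) * v = 1"
  shows "star a = star a * star a * a ^ n * v"
proof -
  have "star a * star b = 0"
    by (metis assms(1) star_mult star_zero)
  then have "star a * ((star a * a ^ n + star b * b) * v) = star a * star a * a ^ n * v"
    by (simp add: ring_distribs mult.assoc[symmetric])
  with assms(2) show ?thesis by simp
qed

lemma hermitian_of_eq_mult_star_mult:
  fixes x z :: "'a::star_ring"
  assumes "x = z * star x * x"
  shows "star (x * star z) = x * star z" and "x * star z * x = x"
proof -
  have "star x = star x * x * star z"
    using arg_cong[OF assms, of star] by (simp add: star_mult star_star mult.assoc)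
  then have "z * star x = x * star z"
    by (metis assms mult.assoc)
  then show "star (x * star z) = x * star z" and "x * star z * x = x"
    by (simp_all add: star_mult star_star) (metis assms)
qed

lemma mult_left_unit_of_square:
  fixes a p s r :: "'a::ring_1"
  assumes a: "a = s * a * a" and p: "p * a * a = a * a" "p = a * a * a * r"
  shows "p * a = a"
proof -
  define t where "t = r * a * a"
  have a2: "a * a = a * a * a * t"
    using p by (metis t_def mult.assoc)
  have "a - a * a * t = s * (a * a - a * a * a * t)"
    by (subst (1 2) a) (simp add: algebra_simps)
  then have at: "a = a * a * t"
    using a2 by simp
  then show ?thesis
    using p(1) by (metis mult.assoc)
qed

lemma is_core_inverse_of_star_eq:
  fixes a v :: "'a::star_ring"
  assumes "n \<ge> 3" and a_star: "star a = star a * star a * a ^ n * v"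
  shows "is_core_inverse a (a ^ (n - 1) * v * star a)"
proof -
  obtain m where n: "n = Suc (Suc (Suc m))"
    using assms(1) by (metis add.commute add_Suc_right le_Suc_ex numeral_3_eq_3 add_0)
  define s where "s = star (a ^ n * v)"
  define p where "p = a ^ n * v * star a"
  define x where "x = a ^ (n - 1) * v * star a"
  have a_s: "a = s * a * a"
    using arg_cong[OF a_star, of star] by (simp add: s_def star_mult star_star mult.assoc)
  have "a * a = (a * star v * star (a ^ Suc m)) * star (a * a) * (a * a)"
    using a_s by (simp add: s_def n star_mult mult.assoc)
  from hermitian_of_eq_mult_star_mult[OF this]
  have p_herm: "star p = p" and p_a2: "p * a * a = a * a"
    by (simp_all add: p_def n star_mult star_star mult.assoc)
  have p_a: "p * a = a"
    by (rule mult_left_unit_of_square[OF a_s p_a2, of "a ^ m * v * star a"])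
      (simp add: p_def n mult.assoc)
  have ax: "a * x = p"
    by (simp add: x_def p_def n mult.assoc)
  have "a * x ^ 2 = p * x"
    by (simp add: power2_eq_square ax mult.assoc[symmetric])
  also have "\<dots> = x"
    by (simp add: x_def n p_a mult.assoc[symmetric])
  finally have ax2: "a * x ^ 2 = x" .
  have "a ^ (n - 1) = s * a ^ n"
    using arg_cong[OF a_s, of "\<lambda>y. y * a ^ Suc m"] by (simp add: n mult.assoc)
  then have "x * a ^ 2 = s * (p * a * a)"
    by (simp add: x_def p_def power2_eq_square mult.assoc)
  then have xa2: "x * a ^ 2 = a"
    using a_s p_a2 by (simp add: mult.assoc)
  show ?thesis
    unfolding is_core_inverse_def using ax p_herm ax2 xa2 x_def by simp
qed

theorem theorem2p6:
  fixes a :: "'a::star_ring" and n :: nat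
  assumes "n \<ge> 3"
  shows "(core_invertible a \<longleftrightarrow>
           (\<exists>b. left_ann a = left_ideal_gen b \<and>
                invertible_el (star a * a ^ n + star b * b)))
       \<and> (\<forall>b. left_ann a = left_ideal_gen b \<and>
                invertible_el (star a * a ^ n + star b * b) \<longrightarrow>
              core_inverse a = a ^ (n - 1) * ring_inv (star a * a ^ n + star b * b) * star a)"
proof -
  have core: "is_core_inverse a (a ^ (n - 1) * ring_inv (star a * a ^ n + star b * b) * star a)"
    if "left_ann a = left_ideal_gen b" and "invertible_el (star a * a ^ n + star b * b)" for b
    using is_core_inverse_of_star_eq[OF assms star_eq_of_right_inverse]
      mult_eq_0_of_left_ann_eq[OF that(1)] ring_inv_right_inverse[OF that(2)] by blast
  have "\<exists>b. left_ann a = left_ideal_gen b \<and> invertible_el (star a * a ^ n + star b * b)"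
    if "is_core_inverse a c" for c
    using left_ann_core_inverse[OF that] invertible_el_of_core_inverse[OF that] assms by auto
  with core show ?thesis
    unfolding core_invertible_def using core_inverse_eqI by blast
qed

end
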